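(* For every integer $k\ge1$ and all $a,b\in\mathbb{C}$ such that $\frac{a+k+1}{2}$ and $\frac{a+k+m}{2}$ ($m=0,1,\dots,k$) are not nonpositive integers, $$\frac{\Gamma\!\left(\frac{a+k+1}{2}\right)}{\Gamma\!\left(\frac{a-k+1}{2}-b\right)}=\sum_{m=0}^{k}\binom{k}{m}\left(a+\frac{k-1}{2}-\frac{bm}{k}-\frac{(k+1)(a+k-1)}{2(m+1)}\right)\frac{\Gamma\!\left(\frac{a+k+m}{2}\right)}{\Gamma\!\left(\frac{a-k+m}{2}-b+1\right)}.$$
   Context: $\Gamma$ is Euler's gamma function; $1/\Gamma$ is understood as the entire function (equal to $0$ at nonpositive integers). *)

theory Defs
  imports "HOL-Analysis.Analysis"
begin

end

theory Submission
  imports Defs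
begin

text \<open>With \<open>w\<^sub>m = (a + k + m)/2\<close> and \<open>z\<^sub>m = (a - k + m)/2 - b\<close>, the \<open>m\<close>-th coefficient splits as
  \<open>m C(k,m)/k \<cdot> z\<^sub>m - (m+2) C(k,m+2)/k \<cdot> w\<^sub>m\<close>. By \<open>\<Gamma>(w+1) = w \<Gamma>(w)\<close> and \<open>1/\<Gamma>(z) = z/\<Gamma>(z+1)\<close>
  the \<open>m\<close>-th summand is then \<open>H m - H (m+2)\<close> for \<open>H m = m C(k,m)/k \<cdot> \<Gamma>(w\<^sub>m)/\<Gamma>(z\<^sub>m)\<close>, so the sum
  telescopes to \<open>H 0 + H 1 - H (k+1) - H (k+2) = H 1\<close>, the left-hand side.\<close>

lemma sum_telescope_2:
  fixes f :: "nat \<Rightarrow> 'a::ab_group_add"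
  shows "(\<Sum>i = 0..n. f i - f (i + 2)) = f 0 + f 1 - f (n + 1) - f (n + 2)"
  by (induction n) (simp_all add: algebra_simps)

lemma Suc_times_gbinomial_Suc:
  fixes a :: "'a::field_char_0"
  shows "of_nat (Suc k) * (a gchoose Suc k) = (a - of_nat k) * (a gchoose k)"
  using gbinomial_mult_1[of a k] by (simp add: algebra_simps)

lemma of_nat_mult_binomial_add_2:
  fixes k m :: nat
  shows "(of_nat (m + 2) * of_nat (k choose (m + 2)) :: 'a::field_char_0)
      = (of_nat k - of_nat m - 1) * (of_nat k - of_nat m) / (of_nat m + 1) * of_nat (k choose m)"
proof -
  define x :: 'a where "x = of_nat k"
  have gchoose_Suc: "of_nat (Suc m) * (x gchoose Suc m) = (x - of_nat m) * (x gchoose m)"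
    by (rule Suc_times_gbinomial_Suc)
  have gchoose_Suc_Suc: "of_nat (Suc (Suc m)) * (x gchoose Suc (Suc m)) = (x - of_nat m - 1) * (x gchoose Suc m)"
    using Suc_times_gbinomial_Suc[where a = x and k = "Suc m"] by (simp add: algebra_simps)
  have "(of_nat m + 1 :: 'a) \<noteq> 0" by (metis of_nat_Suc of_nat_neq_0 add.commute)
  then have "x gchoose Suc m = (x - of_nat m) / (of_nat m + 1) * (x gchoose m)"
    using gchoose_Suc by (simp add: field_simps)
  with gchoose_Suc_Suc show ?thesis
    by (simp add: binomial_gbinomial x_def[symmetric] numeral_2_eq_2 algebra_simps)
qed

lemma binomial_weight_decompose:
  fixes a b :: "'a::field_char_0"
  assumes "k \<ge> 1"
  shows "of_nat (k choose m) *
      (a + (of_nat k - 1) / 2 - b * of_nat m / of_nat k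
         - (of_nat k + 1) * (a + of_nat k - 1) / (2 * (of_nat m + 1)))
    = of_nat m * of_nat (k choose m) / of_nat k * ((a - of_nat k + of_nat m) / 2 - b)
      - of_nat (m + 2) * of_nat (k choose (m + 2)) / of_nat k * ((a + of_nat k + of_nat m) / 2)"
proof -
  \<comment> \<open>Naming \<open>m + 1\<close> keeps \<open>field_simps\<close> from splitting the denominator \<open>2 (m + 1)\<close>.\<close>
  define x u :: 'a where "x = of_nat k" and "u = of_nat (Suc m)"
  have "x \<noteq> 0" "u \<noteq> 0"
    using assms by (simp_all add: x_def u_def del: of_nat_Suc)
  then have "of_nat (k choose m) * (a + (x - 1) / 2 - b * (u - 1) / x - (x + 1) * (a + x - 1) / (2 * u))
    = (u - 1) * of_nat (k choose m) / x * ((a - x + (u - 1)) / 2 - b)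
      - (x - (u - 1) - 1) * (x - (u - 1)) / u * of_nat (k choose m) / x * ((a + x + (u - 1)) / 2)"
    by (simp add: field_simps)
  then show ?thesis
    unfolding of_nat_mult_binomial_add_2 by (simp add: x_def u_def algebra_simps)
qed

lemma Gamma_rGamma_telescoping_term:
  fixes p q w z :: complex
  assumes "w \<notin> \<int>\<^sub>\<le>\<^sub>0"
  shows "(p * z - q * w) * Gamma w * rGamma (z + 1)
    = p * Gamma w * rGamma z - q * Gamma (w + 1) * rGamma (z + 1)"
  using Gamma_plus1[OF assms] rGamma_plus1[of z] by (simp add: algebra_simps)

definition gamma_telescope_term :: "complex \<Rightarrow> complex \<Rightarrow> nat \<Rightarrow> nat \<Rightarrow> complex" where
  "gamma_telescope_term a b k m = of_nat m * of_nat (k choose m) / of_nat k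
    * Gamma ((a + of_nat k + of_nat m) / 2) * rGamma ((a - of_nat k + of_nat m) / 2 - b)"

lemma gamma_telescope_term_add_2:
  "gamma_telescope_term a b k (m + 2) = of_nat (m + 2) * of_nat (k choose (m + 2)) / of_nat k
    * Gamma ((a + of_nat k + of_nat m) / 2 + 1) * rGamma ((a - of_nat k + of_nat m) / 2 - b + 1)"
proof -
  have shift: "(c + of_nat (m + 2)) / 2 = (c + of_nat m) / 2 + 1" for c :: complex
    by (simp add: field_simps)
  show ?thesis
    unfolding gamma_telescope_term_def shift by (simp add: algebra_simps)
qed

lemma summand_eq_gamma_telescope_term_diff:
  assumes "k \<ge> 1" and "(a + of_nat k + of_nat m) / 2 \<notin> \<int>\<^sub>\<le>\<^sub>0"
  shows "of_nat (k choose m) *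
       (a + (of_nat k - 1) / 2 - b * of_nat m / of_nat k
          - (of_nat k + 1) * (a + of_nat k - 1) / (2 * (of_nat m + 1)))
       * Gamma ((a + of_nat k + of_nat m) / 2) * rGamma ((a - of_nat k + of_nat m) / 2 - b + 1)
    = gamma_telescope_term a b k m - gamma_telescope_term a b k (m + 2)"
  unfolding binomial_weight_decompose[OF assms(1)] Gamma_rGamma_telescoping_term[OF assms(2)]
    gamma_telescope_term_add_2
  by (simp add: gamma_telescope_term_def)

theorem mainTheorem5:
  fixes k :: nat and a b :: complex
  assumes "k \<ge> 1"
    and "(a + of_nat k + 1) / 2 \<notin> \<int>\<^sub>\<le>\<^sub>0"
    and "\<And>m. m \<le> k \<Longrightarrow> (a + of_nat k + of_nat m) / 2 \<notin> \<int>\<^sub>\<le>\<^sub>0"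
  shows "Gamma ((a + of_nat k + 1) / 2) * rGamma ((a - of_nat k + 1) / 2 - b) =
    (\<Sum>m = 0..k. of_nat (k choose m) *
       (a + (of_nat k - 1) / 2 - b * of_nat m / of_nat k
          - (of_nat k + 1) * (a + of_nat k - 1) / (2 * (of_nat m + 1)))
       * Gamma ((a + of_nat k + of_nat m) / 2) * rGamma ((a - of_nat k + of_nat m) / 2 - b + 1))"
proof -
  \<comment> \<open>The hypothesis on \<open>(a + k + 1)/2\<close> is the instance \<open>m = 1\<close> of the last one.\<close>
  let ?H = "gamma_telescope_term a b k"
  have "(\<Sum>m = 0..k. ?H m - ?H (m + 2)) = ?H 1"
    unfolding sum_telescope_2 by (simp add: gamma_telescope_term_def binomial_eq_0)
  also have "\<dots> = Gamma ((a + of_nat k + 1) / 2) * rGamma ((a - of_nat k + 1) / 2 - b)"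
    using assms(1) by (simp add: gamma_telescope_term_def)
  finally show ?thesis
    using summand_eq_gamma_telescope_term_diff[OF assms(1) assms(3)]
    by (metis (no_types, lifting) atLeastAtMost_iff sum.cong)
qed

end
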